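(* Let $H$ be a separable complex Hilbert space and $U:H\to H$ a unitary operator. Then $U$ is recurrent if and only if $U$ is rigid.
   Context: $U$ is recurrent if for every non-empty open $V\subset H$ there is a positive integer $k$ with $V\cap U^{-k}(V)\neq\emptyset$; $U$ is rigid if there is an increasing sequence of positive integers $(k_n)$ with $U^{k_n}x\to x$ for every $x\in H$. *)

theory Defs
  imports "HOL-Analysis.Analysis"
begin

text \<open>A complex Hilbert space is
represented as a real Hilbert space (type of class real_inner and complete_space)
together with an orthogonal complex structure J (multiplication by i):
J is real-linear, J (J x) = -x and J preserves the real inner product.
Complex scalar multiplication is (a + i b) x = a x + b J x and the complex inner
product is x \<bullet> y + i (x \<bullet> J y) (up to convention); this is exactly a complex
Hilbert space, and every complex Hilbert space arises this way.\<close>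

definition complex_structure :: "('a::real_inner \<Rightarrow> 'a) \<Rightarrow> bool" where
  "complex_structure J \<longleftrightarrow> linear J \<and> (\<forall>x. J (J x) = - x) \<and> (\<forall>x y. J x \<bullet> J y = x \<bullet> y)"

definition scaleJ :: "('a::real_vector \<Rightarrow> 'a) \<Rightarrow> complex \<Rightarrow> 'a \<Rightarrow> 'a" where
  "scaleJ J c x = Re c *\<^sub>R x + Im c *\<^sub>R J x"

text \<open>Complex inner product induced by J (linear in the first argument).\<close>
definition cinnerJ :: "('a::real_inner \<Rightarrow> 'a) \<Rightarrow> 'a \<Rightarrow> 'a \<Rightarrow> complex" where
  "cinnerJ J x y = Complex (x \<bullet> y) (x \<bullet> J y)"

definition unitary_op :: "('a::real_inner \<Rightarrow> 'a) \<Rightarrow> ('a \<Rightarrow> 'a) \<Rightarrow> bool" where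
  "unitary_op J U \<longleftrightarrow>
     (\<forall>x y. U (x + y) = U x + U y) \<and> (\<forall>c x. U (scaleJ J c x) = scaleJ J c (U x)) \<and>
     surj U \<and> (\<forall>x y. cinnerJ J (U x) (U y) = cinnerJ J x y)"

definition separable_type :: "'a::topological_space itself \<Rightarrow> bool" where
  "separable_type _ \<longleftrightarrow> (\<exists>D::'a set. countable D \<and> closure D = UNIV)"

definition recurrent :: "('a::topological_space \<Rightarrow> 'a) \<Rightarrow> bool" where
  "recurrent U \<longleftrightarrow> (\<forall>V. open V \<and> V \<noteq> {} \<longrightarrow> (\<exists>k::nat. k > 0 \<and> V \<inter> (U ^^ k) -` V \<noteq> {}))"

definition rigid :: "('a::topological_space \<Rightarrow> 'a) \<Rightarrow> bool" where
  "rigid U \<longleftrightarrow> (\<exists>k::nat \<Rightarrow> nat. strict_mono k \<and> (\<forall>n. k n > 0) \<and>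
                    (\<forall>x. (\<lambda>n. (U ^^ k n) x) \<longlonglongrightarrow> x))"

end

theory Submission
  imports Defs
begin

text \<open>Conversely, for an isometry recurrence says that
for every vector u the displacements \<open>\<parallel>U\<^sup>k u - u\<parallel>\<close> become arbitrarily small for suitable
\<open>k > 0\<close>, and multiples of such \<open>k\<close> can be taken arbitrarily large. The heart of the proof is
that a single vector controls finitely many: given x, y and \<open>\<epsilon>\<close>, a vector \<open>u = M x + z\<close>
makes the displacements of x and y smaller than \<open>\<epsilon>\<close> whenever its own is small enough.
Here z is a component of y almost orthogonal to the subspace of vectors whose
displacements are dominated by those of x. Since this subspace contains x together with its
images and preimages, the displacements of x and z are almost orthogonal, so neither can
cancel the other in the displacement of u. A diagonal argument along a dense sequence
then produces a rigidity sequence.\<close>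

lemma orthogonal_transformation_funpow:
  fixes f :: "'a::real_inner \<Rightarrow> 'a"
  shows "orthogonal_transformation f \<Longrightarrow> orthogonal_transformation (f ^^ n)"
  by (induction n) (simp_all add: id_def orthogonal_transformation_compose)

lemma orthogonal_transformation_inner_displacement:
  assumes T: "orthogonal_transformation T" and p: "T p = x"
  shows "(T x - x) \<bullet> (T z - z) = ((x - p) - (T x - x)) \<bullet> z"
proof -
  have "T x \<bullet> T z = x \<bullet> z" and "x \<bullet> T z = p \<bullet> z"
    using T p by (auto simp: orthogonal_transformation_def)
  then show ?thesis by (simp add: inner_diff_left inner_diff_right inner_commute)
qed

lemma orthogonal_transformation_norm_preimage_displacement:
  assumes T: "orthogonal_transformation T" and p: "T p = x"
  shows "norm ((x - p) - (T x - x)) \<le> 2 * norm (T x - x)"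
proof -
  have "norm (x - p) = norm (T x - x)"
    using T p by (metis orthogonal_transformation_def linear_diff orthogonal_transformation_norm)
  then show ?thesis using norm_triangle_ineq4[of "x - p" "T x - x"] by simp
qed

text \<open>The subspace need not be closed, so only an almost best approximation is available.\<close>

lemma subspace_almost_orthogonal_approximant:
  fixes S :: "'a::real_inner set"
  assumes S: "subspace S" and e: "e > 0"
  obtains w where "w \<in> S" and "\<And>v. v \<in> S \<Longrightarrow> \<bar>(y - w) \<bullet> v\<bar> \<le> e * norm v"
proof -
  define D where "D = (INF v\<in>S. (norm (y - v))\<^sup>2)"
  have bdd: "bdd_below ((\<lambda>v. (norm (y - v))\<^sup>2) ` S)"
    by (rule bdd_belowI[of _ 0]) auto
  have D_le: "D \<le> (norm (y - v))\<^sup>2" if "v \<in> S" for v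
    unfolding D_def using bdd that by (rule cINF_lower)
  have "\<exists>w\<in>S. (norm (y - w))\<^sup>2 < D + e\<^sup>2"
    using subspace_0[OF S] bdd e unfolding D_def by (subst cINF_less_iff[symmetric]) auto
  then obtain w where w: "w \<in> S" and w_near: "(norm (y - w))\<^sup>2 < D + e\<^sup>2" ..
  have "\<bar>(y - w) \<bullet> v\<bar> \<le> e * norm v" if v: "v \<in> S" for v
  proof (cases "v = 0")
    case False
    define z where "z = y - w"
    define t where "t = (z \<bullet> v) / (norm v)\<^sup>2"
    have nv: "(norm v)\<^sup>2 > 0" using False by simp
    have "D \<le> (norm (y - (w + t *\<^sub>R v)))\<^sup>2"
      using D_le subspace_add[OF S w subspace_scale[OF S v]] by blast
    also have "\<dots> = (norm z)\<^sup>2 - 2 * t * (z \<bullet> v) + t\<^sup>2 * (norm v)\<^sup>2"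
      unfolding power2_norm_eq_inner z_def
      by (simp add: inner_diff_left inner_diff_right inner_commute algebra_simps power2_eq_square)
    also have "\<dots> = (norm z)\<^sup>2 - (z \<bullet> v)\<^sup>2 / (norm v)\<^sup>2"
      using nv by (simp add: t_def field_simps power2_eq_square)
    finally have "(z \<bullet> v)\<^sup>2 / (norm v)\<^sup>2 < e\<^sup>2"
      using w_near by (simp add: z_def)
    then have "(z \<bullet> v)\<^sup>2 < (e * norm v)\<^sup>2"
      using nv by (simp add: divide_less_eq power_mult_distrib)
    then have "\<bar>z \<bullet> v\<bar> \<le> e * norm v"
      using e by (intro power2_le_imp_le[of "\<bar>z \<bullet> v\<bar>"]) auto
    then show ?thesis by (simp add: z_def)
  qed simp
  with w that show ?thesis by blast
qed

lemma norm_bounds_if_almost_orthogonal: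
  fixes a b :: "'a::real_inner"
  assumes ab: "\<bar>a \<bullet> b\<bar> \<le> 2 * s * norm a" and M: "M \<ge> 0" and small: "norm (M *\<^sub>R a + b) < s"
  shows "M * norm a < 5 * s" and "norm b < 3 * s"
proof -
  define t where "t = M * norm a"
  have "(norm (M *\<^sub>R a + b))\<^sup>2 = t\<^sup>2 + 2 * M * (a \<bullet> b) + (norm b)\<^sup>2"
    unfolding power2_norm_eq_inner t_def power_mult_distrib
    by (simp add: inner_commute algebra_simps power2_eq_square)
  moreover have "M * (a \<bullet> b) \<ge> M * - (2 * s * norm a)"
    using ab M by (intro mult_left_mono) auto
  moreover have "(norm (M *\<^sub>R a + b))\<^sup>2 < s\<^sup>2"
    using small by (simp add: power_strict_mono)
  ultimately have bound: "(t - 2 * s)\<^sup>2 + (norm b)\<^sup>2 < 5 * s\<^sup>2"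
    by (simp add: t_def power2_eq_square algebra_simps)
  have "s > 0" using small norm_ge_zero by (rule le_less_trans[rotated])
  then have "5 * s\<^sup>2 \<le> (3 * s)\<^sup>2" by (simp add: power_mult_distrib)
  with bound have "(t - 2 * s)\<^sup>2 < (3 * s)\<^sup>2" and "(norm b)\<^sup>2 < (3 * s)\<^sup>2"
    using zero_le_power2[of "norm b"] zero_le_power2[of "t - 2 * s"] by linarith+
  with \<open>s > 0\<close> show "t < 5 * s" "norm b < 3 * s"
    using power2_less_imp_less[of "t - 2 * s" "3 * s"] power2_less_imp_less[of "norm b" "3 * s"]
    by auto
qed

lemma tendsto_on_dense_imp_tendsto:
  fixes g :: "nat \<Rightarrow> 'a::metric_space \<Rightarrow> 'a"
  assumes dense: "closure D = UNIV"
    and nonexpansive: "\<And>n x y. dist (g n x) (g n y) \<le> dist x y"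
    and on_dense: "\<And>y. y \<in> D \<Longrightarrow> (\<lambda>n. g n y) \<longlonglongrightarrow> y"
  shows "(\<lambda>n. g n x) \<longlonglongrightarrow> x"
proof (rule tendstoI)
  fix e :: real assume "e > 0"
  then have "e / 3 > 0" by simp
  then obtain y where y: "y \<in> D" "dist y x < e / 3"
    using dense closure_approachable[of x D] by blast
  have "eventually (\<lambda>n. dist (g n y) y < e / 3) sequentially"
    using on_dense[OF \<open>y \<in> D\<close>] \<open>e > 0\<close> by (intro tendstoD) auto
  then show "eventually (\<lambda>n. dist (g n x) x < e) sequentially"
  proof (rule eventually_mono)
    fix n assume "dist (g n y) y < e / 3"
    moreover have "dist (g n x) x \<le> dist (g n x) (g n y) + dist (g n y) y + dist y x"
      using dist_triangle[of "g n x" x "g n y"] dist_triangle[of "g n y" x y] by linarith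
    ultimately show "dist (g n x) x < e"
      using nonexpansive[of n x y] y(2) by (simp add: dist_commute)
  qed
qed

lemma rigid_if_returns_on_finite_sets:
  fixes f :: "'a::metric_space \<Rightarrow> 'a"
  assumes "separable_type TYPE('a)"
    and nonexpansive: "\<And>k x y. dist ((f ^^ k) x) ((f ^^ k) y) \<le> dist x y"
    and returns: "\<And>F e N. finite F \<Longrightarrow> e > 0 \<Longrightarrow> \<exists>k>N. \<forall>v\<in>F. dist ((f ^^ k) v) v < e"
  shows "rigid f"
proof -
  obtain D :: "'a set" where "countable D" and dense: "closure D = UNIV"
    using assms(1) unfolding separable_type_def by blast
  then have "D \<noteq> {}" by auto
  define d where "d = from_nat_into D"
  have range_d: "range d = D"
    unfolding d_def using \<open>D \<noteq> {}\<close> \<open>countable D\<close> by (rule range_from_nat_into)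
  define P where
    "P n k \<longleftrightarrow> 0 < k \<and> (\<forall>i\<le>n. dist ((f ^^ k) (d i)) (d i) < 1 / Suc n)" for n k
  have "\<exists>k>N. P n k" for n N
    using returns[of "d ` {..n}" "1 / Suc n" N] by (auto simp: P_def)
  then obtain r where r: "\<And>n. P n (r n) \<and> r n < r (Suc n)"
    using dependent_nat_choice[of P "\<lambda>_ k k'. k < k'"] by blast
  have "(\<lambda>n. (f ^^ r n) y) \<longlonglongrightarrow> y" if "y \<in> D" for y
  proof (rule tendstoI)
    fix e :: real assume "e > 0"
    then obtain N where N: "1 / Suc N < e" by (rule nat_approx_posE)
    obtain i where i: "y = d i" using \<open>y \<in> D\<close> range_d by blast
    have "dist ((f ^^ r n) y) y < e" if "n \<ge> max i N" for n
    proof -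
      have "dist ((f ^^ r n) y) y < 1 / Suc n"
        using r[of n] that by (auto simp: P_def i)
      also have "\<dots> \<le> 1 / Suc N"
        using that by (simp add: frac_le)
      finally show ?thesis using N by simp
    qed
    then show "eventually (\<lambda>n. dist ((f ^^ r n) y) y < e) sequentially"
      by (rule eventually_sequentiallyI)
  qed
  then have "(\<lambda>n. (f ^^ r n) x) \<longlonglongrightarrow> x" for x
    by (rule tendsto_on_dense_imp_tendsto[OF dense nonexpansive])
  moreover have "strict_mono r"
    using r by (simp add: strict_mono_Suc_iff)
  ultimately show ?thesis
    using r unfolding rigid_def P_def by blast
qed

lemma rigid_imp_recurrent:
  fixes f :: "'a::topological_space \<Rightarrow> 'a"
  assumes "rigid f"
  shows "recurrent f"
  unfolding recurrent_def
proof (intro allI impI)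
  fix V :: "'a set" assume V: "open V \<and> V \<noteq> {}"
  then obtain x where "x \<in> V" by auto
  obtain k where k: "\<And>n. k n > 0" "(\<lambda>n. (f ^^ k n) x) \<longlonglongrightarrow> x"
    using assms unfolding rigid_def by blast
  have "eventually (\<lambda>n. (f ^^ k n) x \<in> V) sequentially"
    using topological_tendstoD[OF k(2)] V \<open>x \<in> V\<close> by blast
  then obtain n where "(f ^^ k n) x \<in> V"
    by (auto simp: eventually_sequentially)
  then show "\<exists>k>0. V \<inter> (f ^^ k) -` V \<noteq> {}"
    using k(1) \<open>x \<in> V\<close> by blast
qed

locale surj_orthogonal_transformation =
  fixes U :: "'a::real_inner \<Rightarrow> 'a"
  assumes orthogonal_U: "orthogonal_transformation U" and surj_U: "surj U"
begin

abbreviation displacement :: "nat \<Rightarrow> 'a \<Rightarrow> 'a" where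
  "displacement k v \<equiv> (U ^^ k) v - v"

lemma orthogonal_iter: "orthogonal_transformation (U ^^ k)"
  using orthogonal_U by (rule orthogonal_transformation_funpow)

lemma linear_iter: "linear (U ^^ k)"
  using orthogonal_iter by (rule orthogonal_transformation_linear)

lemma norm_iter [simp]: "norm ((U ^^ k) v) = norm v"
  using orthogonal_iter by (rule orthogonal_transformation_norm)

lemma iter_diff: "(U ^^ k) (v - w) = (U ^^ k) v - (U ^^ k) w"
  using linear_iter by (rule linear_diff)

lemma displacement_iter: "displacement k ((U ^^ j) v) = (U ^^ j) (displacement k v)"
proof -
  have "U ^^ k \<circ> U ^^ j = U ^^ j \<circ> U ^^ k"
    by (simp flip: funpow_add add: add.commute)
  then show ?thesis by (simp add: iter_diff fun_eq_iff)
qed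

lemma norm_displacement_iter [simp]:
  "norm (displacement k ((U ^^ j) v)) = norm (displacement k v)"
  by (simp add: displacement_iter)

definition dominated :: "'a \<Rightarrow> 'a set" where
  "dominated x = {w. \<exists>C. \<forall>k. norm (displacement k w) \<le> C * norm (displacement k x)}"

lemma subspace_dominated: "subspace (dominated x)"
proof (unfold subspace_def, intro conjI ballI allI)
  show "0 \<in> dominated x"
    by (auto simp: dominated_def linear_0[OF linear_iter] intro: exI[of _ 0])
next
  fix v w assume "v \<in> dominated x" "w \<in> dominated x"
  then obtain C D where
    C: "\<And>k. norm (displacement k v) \<le> C * norm (displacement k x)" and
    D: "\<And>k. norm (displacement k w) \<le> D * norm (displacement k x)"
    by (auto simp: dominated_def)
  have "norm (displacement k (v + w)) \<le> (C + D) * norm (displacement k x)" for k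
  proof -
    have "norm (displacement k (v + w)) = norm (displacement k v + displacement k w)"
      by (simp add: linear_add[OF linear_iter] algebra_simps)
    also have "\<dots> \<le> norm (displacement k v) + norm (displacement k w)"
      by (rule norm_triangle_ineq)
    also have "\<dots> \<le> (C + D) * norm (displacement k x)"
      using C[of k] D[of k] by (simp add: distrib_right)
    finally show ?thesis .
  qed
  then show "v + w \<in> dominated x" by (auto simp: dominated_def)
next
  fix c :: real and v assume "v \<in> dominated x"
  then obtain C where C: "\<And>k. norm (displacement k v) \<le> C * norm (displacement k x)"
    by (auto simp: dominated_def)
  have "norm (displacement k (c *\<^sub>R v)) \<le> (\<bar>c\<bar> * C) * norm (displacement k x)" for k
  proof -
    have "displacement k (c *\<^sub>R v) = c *\<^sub>R displacement k v"
      by (simp add: linear_scale[OF linear_iter] scaleR_diff_right)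
    then show ?thesis
      using mult_left_mono[OF C[of k] abs_ge_zero[of c]] by simp
  qed
  then show "c *\<^sub>R v \<in> dominated x" by (auto simp: dominated_def)
qed

lemma dominated_if_iterates_meet:
  assumes "(U ^^ j) p = (U ^^ i) x"
  shows "p \<in> dominated x"
proof -
  have "norm (displacement k p) = norm (displacement k x)" for k
    by (metis assms norm_displacement_iter)
  then show ?thesis unfolding dominated_def by (auto intro: exI[of _ 1])
qed

lemma norm_displacement_bounds:
  assumes almost_orthogonal: "\<And>v. v \<in> dominated x \<Longrightarrow> \<bar>z \<bullet> v\<bar> \<le> s * norm v"
    and M: "M \<ge> 0" and small: "norm (displacement k (M *\<^sub>R x + z)) < s"
  shows "M * norm (displacement k x) < 5 * s" and "norm (displacement k z) < 3 * s"
proof -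
  define a where "a = displacement k x"
  define b where "b = displacement k z"
  have "s > 0" using small norm_ge_zero by (rule le_less_trans[rotated])
  obtain p where p: "(U ^^ k) p = x"
    using surj_fn[OF surj_U] by (metis surjD)
  have "x \<in> dominated x" "p \<in> dominated x" "(U ^^ k) x \<in> dominated x"
    using dominated_if_iterates_meet[of 0 x 0 x] dominated_if_iterates_meet[of k p 0 x] p
      dominated_if_iterates_meet[of 0 "(U ^^ k) x" k x]
    by simp_all
  then have "(x - p) - a \<in> dominated x"
    unfolding a_def by (intro subspace_diff[OF subspace_dominated])
  then have "\<bar>((x - p) - a) \<bullet> z\<bar> \<le> s * norm ((x - p) - a)"
    using almost_orthogonal by (metis inner_commute)
  also have "\<dots> \<le> s * (2 * norm a)"
    using orthogonal_transformation_norm_preimage_displacement[OF orthogonal_iter p] \<open>s > 0\<close>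
    by (simp add: a_def)
  finally have "\<bar>a \<bullet> b\<bar> \<le> 2 * s * norm a"
    using orthogonal_transformation_inner_displacement[OF orthogonal_iter p, of z]
    by (simp add: a_def b_def)
  moreover have "displacement k (M *\<^sub>R x + z) = M *\<^sub>R a + b"
    by (simp add: a_def b_def linear_add[OF linear_iter] linear_scale[OF linear_iter]
        algebra_simps)
  ultimately show "M * norm a < 5 * s" and "norm b < 3 * s"
    using norm_bounds_if_almost_orthogonal[OF _ M] small by auto
qed

lemma controlling_vector_pair:
  assumes "e > 0"
  obtains u d where "d > 0"
    and "\<And>k. norm (displacement k u) < d \<Longrightarrow>
           norm (displacement k x) < e \<and> norm (displacement k y) < e"
proof -
  define s where "s = e / 8"
  have s: "s > 0" using assms by (simp add: s_def)
  obtain w where w: "w \<in> dominated x"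
    and almost_orthogonal: "\<And>v. v \<in> dominated x \<Longrightarrow> \<bar>(y - w) \<bullet> v\<bar> \<le> s * norm v"
    using subspace_almost_orthogonal_approximant[OF subspace_dominated s] by blast
  obtain C where C: "\<And>k. norm (displacement k w) \<le> C * norm (displacement k x)"
    using w by (auto simp: dominated_def)
  define M where "M = max C 1"
  have "norm (displacement k x) < e \<and> norm (displacement k y) < e"
    if small: "norm (displacement k (M *\<^sub>R x + (y - w))) < s" for k
  proof -
    have x_small: "M * norm (displacement k x) < 5 * s"
      and z_small: "norm (displacement k (y - w)) < 3 * s"
      using norm_displacement_bounds[OF almost_orthogonal _ small] by (auto simp: M_def)
    have "norm (displacement k x) \<le> M * norm (displacement k x)"
      by (simp add: M_def mult_le_cancel_right1)
    moreover have "norm (displacement k y) = norm (displacement k (y - w) + displacement k w)"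
      by (simp add: iter_diff algebra_simps)
    moreover note norm_triangle_ineq[of "displacement k (y - w)" "displacement k w"] C[of k]
    moreover have "C * norm (displacement k x) \<le> M * norm (displacement k x)"
      by (simp add: M_def mult_right_mono)
    ultimately show ?thesis
      using x_small z_small s unfolding s_def by linarith
  qed
  with that s show ?thesis by blast
qed

lemma controlling_vector_finite:
  assumes "finite F" and "e > 0"
  obtains u d where "d > 0"
    and "\<And>k. norm (displacement k u) < d \<Longrightarrow> \<forall>v\<in>F. norm (displacement k v) < e"
proof -
  from assms(1) have "\<exists>u d. d > 0 \<and>
      (\<forall>k. norm (displacement k u) < d \<longrightarrow> (\<forall>v\<in>F. norm (displacement k v) < e))"
  proof (induction F rule: finite_induct)
    case empty
    show ?case by (intro exI[of _ 0] exI[of _ 1]) simp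
  next
    case (insert y F)
    then obtain u d where "d > 0"
      and u: "\<And>k. norm (displacement k u) < d \<Longrightarrow> \<forall>v\<in>F. norm (displacement k v) < e"
      by blast
    have "min d e > 0" using \<open>d > 0\<close> assms(2) by simp
    then obtain u' d' where "d' > 0" and u': "\<And>k. norm (displacement k u') < d' \<Longrightarrow>
        norm (displacement k u) < min d e \<and> norm (displacement k y) < min d e"
      by (rule controlling_vector_pair[where x = u and y = y]) blast
    have "\<forall>v\<in>insert y F. norm (displacement k v) < e" if "norm (displacement k u') < d'" for k
      using u'[OF that] u by auto
    with \<open>d' > 0\<close> show ?case by blast
  qed
  with that show ?thesis by blast
qed

lemma norm_displacement_mult:
  "norm (displacement (j * k) v) \<le> j * norm (displacement k v)"
proof (induction j)
  case (Suc j)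
  have "norm (displacement (Suc j * k) v)
      = norm ((U ^^ k) (displacement (j * k) v) + displacement k v)"
    by (simp add: funpow_add iter_diff)
  also have "\<dots> \<le> norm (displacement (j * k) v) + norm (displacement k v)"
    using norm_triangle_ineq[of "(U ^^ k) (displacement (j * k) v)" "displacement k v"]
    by (simp only: norm_iter)
  also have "\<dots> \<le> Suc j * norm (displacement k v)"
    using Suc by (simp add: algebra_simps)
  finally show ?case .
qed simp

lemma recurrent_imp_small_displacement:
  assumes "recurrent U" and "d > 0"
  obtains k where "k > 0" and "norm (displacement k u) < d"
proof -
  have "open (ball u (d / 2))" and "ball u (d / 2) \<noteq> {}"
    using \<open>d > 0\<close> by auto
  then obtain k where "k > 0" and "ball u (d / 2) \<inter> (U ^^ k) -` ball u (d / 2) \<noteq> {}"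
    using assms(1) unfolding recurrent_def by blast
  then obtain v where "dist u v < d / 2" and "dist u ((U ^^ k) v) < d / 2"
    by auto
  moreover have "dist ((U ^^ k) u) ((U ^^ k) v) = dist u v"
    by (simp add: dist_norm flip: iter_diff)
  ultimately have "dist ((U ^^ k) u) u < d"
    using dist_triangle[of "(U ^^ k) u" u "(U ^^ k) v"] dist_commute[of "(U ^^ k) v" u]
    by linarith
  with \<open>k > 0\<close> that show ?thesis by (simp add: dist_norm)
qed

lemma recurrent_imp_returns_on_finite_sets:
  assumes "recurrent U" and "finite F" and "e > 0"
  shows "\<exists>k>N. \<forall>v\<in>F. dist ((U ^^ k) v) v < e"
proof -
  have "e / Suc N > 0" using assms(3) by simp
  then obtain u d where "d > 0"
    and u: "\<And>k. norm (displacement k u) < d \<Longrightarrow> \<forall>v\<in>F. norm (displacement k v) < e / Suc N"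
    by (rule controlling_vector_finite[OF assms(2)]) blast
  obtain k where "k > 0" and "norm (displacement k u) < d"
    using recurrent_imp_small_displacement[OF assms(1) \<open>d > 0\<close>] .
  have "dist ((U ^^ (Suc N * k)) v) v < e" if "v \<in> F" for v
  proof -
    have "norm (displacement (Suc N * k) v) \<le> Suc N * norm (displacement k v)"
      by (rule norm_displacement_mult)
    also have "\<dots> < Suc N * (e / Suc N)"
      using u[OF \<open>norm (displacement k u) < d\<close>] that by (intro mult_strict_left_mono) auto
    finally show ?thesis by (simp add: dist_norm)
  qed
  moreover have "Suc N * k > N"
    using \<open>k > 0\<close> by (cases k) auto
  ultimately show ?thesis by blast
qed

lemma recurrent_imp_rigid:
  assumes "separable_type TYPE('a)" and "recurrent U"
  shows "rigid U"
  using assms(1)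
proof (rule rigid_if_returns_on_finite_sets)
  show "dist ((U ^^ k) x) ((U ^^ k) y) \<le> dist x y" for k x y
    by (simp add: dist_norm flip: iter_diff)
qed (rule recurrent_imp_returns_on_finite_sets[OF assms(2)])

end

lemma unitary_op_imp_orthogonal_transformation:
  assumes "unitary_op J U"
  shows "orthogonal_transformation U"
proof -
  have add: "U (x + y) = U x + U y"
    and scale: "U (scaleJ J c x) = scaleJ J c (U x)"
    and inner: "cinnerJ J (U x) (U y) = cinnerJ J x y" for x y c
    using assms unfolding unitary_op_def by auto
  have "U (r *\<^sub>R x) = r *\<^sub>R U x" for r x
    using scale[of "complex_of_real r" x] by (simp add: scaleJ_def)
  moreover have "U x \<bullet> U y = x \<bullet> y" for x y
    using arg_cong[OF inner[of x y], of Re] by (simp add: cinnerJ_def)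
  ultimately show ?thesis
    unfolding orthogonal_transformation_def by (auto intro: linearI add)
qed

theorem proposition9p3:
  fixes J U :: "'a::{real_inner, complete_space} \<Rightarrow> 'a"
  assumes "complex_structure J"
    and "separable_type TYPE('a)"
    and "unitary_op J U"
  shows "recurrent U \<longleftrightarrow> rigid U"
proof -
  interpret surj_orthogonal_transformation U
    using assms(3) unitary_op_imp_orthogonal_transformation
    by unfold_locales (auto simp: unitary_op_def)
  show ?thesis
    using recurrent_imp_rigid[OF assms(2)] rigid_imp_recurrent by blast
qed

end
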